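(* Let $n \ge 2$ and let $K$ be a compact convex subset of $\mathbb{R}^n$ such that, for every unit vector $u$, the projection $\Xi_u$ contains a translate of $K_u$. Then there exists $x \in \mathbb{R}^n$ such that $$K + x \subseteq D \subseteq \tfrac{n}{n-1}\,\Xi.$$
   Context: $e_1,\dots,e_n$ are the standard basis vectors of $\mathbb{R}^n$ and $o$ is the origin. $\Xi$ is the simplex $\mathrm{conv}\{o, e_1, \dots, e_n\}$. $D$ is the convex hull of $\Xi$ and the point $p = (\tfrac{1}{n-1}, \dots, \tfrac{1}{n-1})$; equivalently $D = \{x \in \mathbb{R}^n : x_i \ge 0 \text{ for all } i,\ \sum_{j \ne i} x_j \le 1 \text{ for all } i\}$. For a set $S$ and unit vector $u$, $S_u$ denotes the orthogonal projection of $S$ onto $u^\perp$; "$A$ contains a translate of $B$" means $B + w \subseteq A$ for some vector $w$. *)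

theory Defs
  imports "HOL-Analysis.Analysis"
begin

definition std_simplex :: "(real ^ 'n) set" where
  "std_simplex = convex hull (insert 0 (range (\<lambda>i. axis i 1)))"

definition simplex_apex :: "real ^ 'n" where
  "simplex_apex = (\<chi> i. 1 / (real CARD('n) - 1))"

definition simplex_D :: "(real ^ 'n) set" where
  "simplex_D = convex hull (insert simplex_apex std_simplex)"

definition proj_perp :: "real ^ 'n \<Rightarrow> (real ^ 'n) set \<Rightarrow> (real ^ 'n) set" where
  "proj_perp u S = (\<lambda>x. x - (x \<bullet> u) *\<^sub>R u) ` S"

definition contains_translate :: "(real ^ 'n) set \<Rightarrow> (real ^ 'n) set \<Rightarrow> bool" where
  "contains_translate A B \<longleftrightarrow> (\<exists>w. (\<lambda>y. y + w) ` B \<subseteq> A)"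

end

theory Submission
  imports Defs
begin

(* Only the n coordinate directions u = e_i are needed.  In coordinates,
   Xi = {x. x >= 0, sum x <= 1}, and D is exactly the set of x >= 0 whose coordinate
   sums with one coordinate omitted are all <= 1 (we only need the inclusion into D).
   Projecting along e_i simply forgets the i-th coordinate, so the hypothesis for u = e_i
   gives a shift w_i with  y_j + w_i$j >= 0  (j ~= i)  and  sum_{j ~= i} (y_j + w_i$j) <= 1
   for all y in K.  Translating K by x = -(coordinatewise infimum of K) makes every
   coordinate nonnegative, and since -inf_j <= w_i$j for j ~= i, each omitted-coordinate sum
   of a translated point is still <= 1; hence K + x lies in D.  Finally
   D <= n/(n-1) Xi because Xi is contained in the convex set n/(n-1) Xi and so is the apex p,
   whose coordinate sum is n/(n-1). *)

lemma range_axis_eq_Basis: "range (\<lambda>i. axis i (1::real)) = (Basis :: (real^'n) set)"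
  by (auto simp: Basis_vec_def)

lemma sum_Basis_inner_cart: "(\<Sum>b\<in>(Basis :: (real^'n) set). x \<bullet> b) = (\<Sum>i\<in>UNIV. x$i)"
proof -
  have "inj (\<lambda>i::'n. axis i (1::real))" by (auto simp: inj_on_def axis_eq_axis)
  then have "(\<Sum>b\<in>range (\<lambda>i. axis i (1::real)). x \<bullet> b) = (\<Sum>i\<in>UNIV. x \<bullet> axis i 1)"
    by (simp add: sum.reindex)
  then show ?thesis by (simp add: range_axis_eq_Basis cart_eq_inner_axis)
qed

lemma std_simplex_char:
  "(std_simplex :: (real^'n) set) = {x. (\<forall>i. 0 \<le> x$i) \<and> (\<Sum>i\<in>UNIV. x$i) \<le> 1}"
  unfolding std_simplex_def range_axis_eq_Basis std_simplex sum_Basis_inner_cart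
  by (auto simp: Basis_vec_def cart_eq_inner_axis)

lemma scaled_std_simplex_memI:
  fixes y :: "real^'n"
  assumes "c > 0" and "\<And>i. 0 \<le> y$i" and "(\<Sum>i\<in>UNIV. y$i) \<le> c"
  shows "y \<in> (\<lambda>y. c *\<^sub>R y) ` std_simplex"
proof -
  have "(1/c) *\<^sub>R y \<in> std_simplex"
    unfolding std_simplex_char using assms by (auto simp: sum_divide_distrib[symmetric])
  moreover have "y = c *\<^sub>R ((1/c) *\<^sub>R y)" using assms(1) by simp
  ultimately show ?thesis by blast
qed

lemma simplex_D_subset_scaled_simplex:
  assumes "CARD('n) \<ge> 2"
  shows "(simplex_D :: (real^'n) set)
           \<subseteq> (\<lambda>y. (real CARD('n) / (real CARD('n) - 1)) *\<^sub>R y) ` std_simplex"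
    (is "_ \<subseteq> (\<lambda>y. ?c *\<^sub>R y) ` _")
  unfolding simplex_D_def
proof (rule hull_minimal)
  have c1: "?c \<ge> 1" using assms by simp
  show "convex ((\<lambda>y. ?c *\<^sub>R y) ` (std_simplex :: (real^'n) set))"
    by (rule convex_scaling) (simp add: std_simplex_def)
  have "simplex_apex \<in> (\<lambda>y. ?c *\<^sub>R y) ` (std_simplex :: (real^'n) set)"
  proof (rule scaled_std_simplex_memI)
    show "?c > 0" "\<And>i. 0 \<le> (simplex_apex :: real^'n)$i" using assms by (simp_all add: simplex_apex_def)
    show "(\<Sum>i\<in>UNIV. (simplex_apex :: real^'n)$i) \<le> ?c" by (simp add: simplex_apex_def)
  qed
  moreover have "std_simplex \<subseteq> (\<lambda>y. ?c *\<^sub>R y) ` (std_simplex :: (real^'n) set)"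
  proof
    fix y :: "real^'n"
    assume "y \<in> std_simplex"
    then have "\<forall>i. 0 \<le> y$i" "(\<Sum>i\<in>UNIV. y$i) \<le> 1" by (auto simp: std_simplex_char)
    then show "y \<in> (\<lambda>y. ?c *\<^sub>R y) ` std_simplex"
      using c1 by (intro scaled_std_simplex_memI) auto
  qed
  ultimately show "insert simplex_apex std_simplex
                     \<subseteq> (\<lambda>y. ?c *\<^sub>R y) ` (std_simplex :: (real^'n) set)"
    by blast
qed

text \<open>If its total sum s exceeds 1, then every coordinate is at
  least s - 1, and subtracting the multiple t = (n-1)(s-1) of the apex leaves a nonnegative
  vector of sum 1 - t, i.e. a point of (1 - t) Xi.\<close>
lemma simplex_D_memI:
  fixes x :: "real^'n"
  assumes n2: "CARD('n) \<ge> 2" and nonneg: "\<And>i. 0 \<le> x$i"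
    and omitted_sum: "\<And>i. (\<Sum>j\<in>UNIV. x$j) - x$i \<le> 1"
  shows "x \<in> simplex_D"
proof -
  define s where "s = (\<Sum>j\<in>UNIV. x$j)"
  define n where "n = real CARD('n)"
  have n2': "n \<ge> 2" using n2 unfolding n_def by simp
  have convex_D: "convex (simplex_D :: (real^'n) set)"
    unfolding simplex_D_def by (rule convex_convex_hull)
  have simplex_in_D: "(std_simplex :: (real^'n) set) \<subseteq> simplex_D"
    unfolding simplex_D_def by (meson hull_subset subset_insertI subset_trans)
  have apex_in_D: "(simplex_apex :: real^'n) \<in> simplex_D"
    unfolding simplex_D_def by (simp add: hull_inc)
  show ?thesis
  proof (cases "s \<le> 1")
    case True
    then have "x \<in> std_simplex" unfolding std_simplex_char using nonneg s_def by auto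
    then show ?thesis using simplex_in_D by auto
  next
    case False
    define t where "t = (n - 1) * (s - 1)"
    have "(\<Sum>i\<in>UNIV. s - x$i) \<le> (\<Sum>i\<in>(UNIV::'n set). 1)"
      by (rule sum_mono) (use omitted_sum s_def in auto)
    then have "n * s - s \<le> n" by (simp add: sum_subtractf s_def n_def)
    then have t_le_1: "t \<le> 1" unfolding t_def by (simp add: algebra_simps)
    have t_ge_0: "0 \<le> t" using False n2' unfolding t_def by simp
    define r where "r = x - (\<chi> i. s - 1)"
    have r_nonneg: "0 \<le> r$i" for i using omitted_sum[of i] by (simp add: r_def s_def)
    have r_sum: "(\<Sum>i\<in>UNIV. r$i) = 1 - t"
      by (simp add: r_def sum_subtractf sum.distrib s_def[symmetric] n_def[symmetric] t_def algebra_simps)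
    have apex_part: "t *\<^sub>R (simplex_apex :: real^'n) = (\<chi> i. s - 1)"
      using n2' by (simp add: simplex_apex_def t_def n_def[symmetric] vec_eq_iff)
    show ?thesis
    proof (cases "t = 1")
      case True
      then have "\<forall>i\<in>UNIV. r$i = 0" using r_sum r_nonneg
        by (subst sum_nonneg_eq_0_iff[symmetric]) auto
      then have "x = simplex_apex" using apex_part True by (simp add: r_def vec_eq_iff)
      then show ?thesis using apex_in_D by simp
    next
      case False
      then have "r \<in> (\<lambda>y. (1 - t) *\<^sub>R y) ` std_simplex"
        using t_le_1 r_nonneg r_sum by (intro scaled_std_simplex_memI) auto
      then obtain z where z: "z \<in> std_simplex" and r_eq: "r = (1 - t) *\<^sub>R z" by blast
      have "x = (\<chi> i. s - 1) + r" by (simp add: r_def)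
      then have "x = t *\<^sub>R simplex_apex + (1 - t) *\<^sub>R z" by (simp add: apex_part r_eq)
      then show ?thesis
        using convexD[OF convex_D apex_in_D, of z t "1 - t"] z simplex_in_D t_ge_0 t_le_1
        by auto
    qed
  qed
qed

text \<open>The projection along e_i forgets the i-th coordinate, so a translate of the projected
  set lies in the projected simplex exactly when the remaining coordinates, shifted by w,
  are nonnegative with sum at most 1.\<close>
lemma axis_projection_translate_coords:
  fixes K :: "(real^'n) set"
  assumes "contains_translate (proj_perp (axis i 1) (std_simplex :: (real^'n) set))
                              (proj_perp (axis i 1) K)"
  shows "\<exists>w. \<forall>y\<in>K. (\<forall>j. j \<noteq> i \<longrightarrow> 0 \<le> y$j + w$j) \<and> (\<Sum>j\<in>UNIV-{i}. y$j + w$j) \<le> 1"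
proof -
  obtain w where w: "(\<lambda>y. y + w) ` proj_perp (axis i 1) K
                       \<subseteq> proj_perp (axis i 1) (std_simplex :: (real^'n) set)"
    using assms unfolding contains_translate_def by blast
  have "(\<forall>j. j \<noteq> i \<longrightarrow> 0 \<le> y$j + w$j) \<and> (\<Sum>j\<in>UNIV-{i}. y$j + w$j) \<le> 1" if "y \<in> K" for y
  proof -
    have "(y - (y \<bullet> axis i 1) *\<^sub>R axis i 1) + w \<in> proj_perp (axis i 1) std_simplex"
      using w that unfolding proj_perp_def by blast
    then obtain z where z: "z \<in> std_simplex"
      and eq: "y - (y \<bullet> axis i 1) *\<^sub>R axis i 1 + w = z - (z \<bullet> axis i 1) *\<^sub>R axis i 1"
      unfolding proj_perp_def by blast
    have same_coord: "y$j + w$j = z$j" if "j \<noteq> i" for j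
      using arg_cong[OF eq, of "\<lambda>v. v$j"] that by (simp add: axis_def)
    have z_nonneg: "\<And>j. 0 \<le> z$j" and z_sum: "(\<Sum>j\<in>UNIV. z$j) \<le> 1"
      using z unfolding std_simplex_char by auto
    have "(\<Sum>j\<in>UNIV-{i}. y$j + w$j) = (\<Sum>j\<in>UNIV-{i}. z$j)"
      by (rule sum.cong) (auto simp: same_coord)
    also have "\<dots> \<le> (\<Sum>j\<in>UNIV. z$j)" by (rule sum_mono2) (auto simp: z_nonneg)
    finally show ?thesis using z_sum same_coord z_nonneg by auto
  qed
  then show ?thesis by blast
qed

text \<open>The translation: if a bounded set admits, for each coordinate i, a shift w i making the
  other coordinates nonnegative with sum at most 1, then translating by minus its coordinatewise
  infimum moves it into D (this shift is dominated by each w i off the i-th coordinate).\<close>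
lemma translate_into_simplex_D:
  fixes K :: "(real^'n) set" and w :: "'n \<Rightarrow> real^'n"
  assumes n2: "CARD('n) \<ge> 2" and "bounded K"
    and shift: "\<And>i y. y \<in> K \<Longrightarrow>
          (\<forall>j. j \<noteq> i \<longrightarrow> 0 \<le> y$j + w i$j) \<and> (\<Sum>j\<in>UNIV-{i}. y$j + w i$j) \<le> 1"
  shows "\<exists>x. (\<lambda>y. y + x) ` K \<subseteq> simplex_D"
proof (cases "K = {}")
  case True
  then show ?thesis by simp
next
  case False
  define m where "m j = Inf ((\<lambda>y. y$j) ` K)" for j
  have bdd: "bdd_below ((\<lambda>y. y$j) ` K)" for j
    using \<open>bounded K\<close> by (intro bounded_imp_bdd_below bounded_component_cart)
  have m_le: "m j \<le> y$j" if "y \<in> K" for j y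
    unfolding m_def using bdd[of j] that by (auto intro: cInf_lower)
  have m_ge: "- w i$j \<le> m j" if "j \<noteq> i" for i j
    unfolding m_def
  proof (rule cInf_greatest)
    show "(\<lambda>y. y$j) ` K \<noteq> {}" using False by simp
    fix a
    assume "a \<in> (\<lambda>y. y$j) ` K"
    then obtain y where "y \<in> K" "a = y$j" by blast
    then show "- w i$j \<le> a" using shift[of y i] that by auto
  qed
  have "y + (\<chi> j. - m j) \<in> simplex_D" if y: "y \<in> K" for y
  proof (rule simplex_D_memI[OF n2])
    let ?q = "y + (\<chi> j. - m j)"
    show "0 \<le> ?q$i" for i using m_le[OF y, of i] by simp
    show "(\<Sum>j\<in>UNIV. ?q$j) - ?q$i \<le> 1" for i
    proof -
      have "(\<Sum>j\<in>UNIV. ?q$j) - ?q$i = (\<Sum>j\<in>UNIV-{i}. ?q$j)"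
        by (simp add: sum.remove[of UNIV i])
      also have "\<dots> \<le> (\<Sum>j\<in>UNIV-{i}. y$j + w i$j)"
      proof (rule sum_mono)
        fix j
        assume "j \<in> UNIV - {i}"
        then show "?q$j \<le> y$j + w i$j" using m_ge[of j i] by simp
      qed
      also have "\<dots> \<le> 1" using shift[OF y] by blast
      finally show ?thesis .
    qed
  qed
  then show ?thesis by blast
qed

theorem theorem4p1:
  fixes K :: "(real ^ 'n) set"
  assumes "CARD('n) \<ge> 2"
    and "compact K" and "convex K"
    and "\<And>u. norm u = 1 \<Longrightarrow>
           contains_translate (proj_perp u (std_simplex :: (real ^ 'n) set)) (proj_perp u K)"
  shows "\<exists>x. (\<lambda>y. y + x) ` K \<subseteq> (simplex_D :: (real ^ 'n) set) \<and>
             (simplex_D :: (real ^ 'n) set)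
               \<subseteq> (\<lambda>y. (real CARD('n) / (real CARD('n) - 1)) *\<^sub>R y) ` std_simplex"
proof -
  have "\<exists>w. \<forall>y\<in>K. (\<forall>j. j \<noteq> i \<longrightarrow> 0 \<le> y$j + w$j) \<and> (\<Sum>j\<in>UNIV-{i}. y$j + w$j) \<le> 1"
    for i :: 'n
    using assms(4)[of "axis i 1"] by (intro axis_projection_translate_coords) simp
  then obtain w where shift: "\<And>i. \<forall>y\<in>K. (\<forall>j. j \<noteq> i \<longrightarrow> 0 \<le> y$j + w i$j)
                                            \<and> (\<Sum>j\<in>UNIV-{i}. y$j + w i$j) \<le> 1"
    by metis
  obtain x where "(\<lambda>y. y + x) ` K \<subseteq> simplex_D"
    using translate_into_simplex_D[OF assms(1) compact_imp_bounded[OF assms(2)], of w] shift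
    by blast
  then show ?thesis using simplex_D_subset_scaled_simplex[OF assms(1)] by blast
qed

end
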